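(* For every $n\ge1$, $$P_{2n}=\sum_{\substack{\lambda\vdash 2n\\ \text{all parts odd}}}(-1)^{\frac12(\ell(\lambda)-2)}\,C_{\frac12(\ell(\lambda)-2)}\,\frac{\ell(\lambda)!}{m_1!\,m_3!\,m_5!\cdots}\,V_\lambda,$$ where $\ell(\lambda)$ is the number of parts of $\lambda$ (necessarily even), $m_i$ is the number of parts equal to $i$, $C_k=\frac{1}{k+1}\binom{2k}{k}$ is the $k$-th Catalan number, and $V_\lambda=P_{\lambda_1}P_{\lambda_2}\cdots$.
   Context: The one-row Schur $P$-functions $P_n$ (symmetric functions in $x=(x_1,x_2,\dots)$ with rational coefficients) are defined by the generating function $1+2\sum_{n\ge1}P_n(x)t^n=\prod_i\frac{1+x_it}{1-x_it}$. For any partition $\lambda$, $V_\lambda=P_{\lambda_1}P_{\lambda_2}\cdots$. *)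

theory Defs
  imports "HOL-Computational_Algebra.Formal_Power_Series" "HOL-Library.Multiset"
begin

text \<open>Generating function prod_{i<N} (1 + x_i t)/(1 - x_i t) in the variables
  x_0, ..., x_{N-1} (a finite specialization of the infinite alphabet).\<close>
definition genP :: "nat \<Rightarrow> (nat \<Rightarrow> rat) \<Rightarrow> rat fps" where
  "genP N x = (\<Prod>i<N. (1 + fps_const (x i) * fps_X) * inverse (1 - fps_const (x i) * fps_X))"

text \<open>One-row Schur P-function P_k evaluated at (x_0,...,x_{N-1},0,0,...):
  1 + 2 sum_{k>=1} P_k t^k = genP; we set P_0 = 1.\<close>
definition schurP :: "nat \<Rightarrow> nat \<Rightarrow> (nat \<Rightarrow> rat) \<Rightarrow> rat" where
  "schurP N k x = (if k = 0 then 1 else fps_nth (genP N x) k / 2)"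

definition V :: "nat \<Rightarrow> nat multiset \<Rightarrow> (nat \<Rightarrow> rat) \<Rightarrow> rat" where
  "V N lam x = (\<Prod>k\<in>#lam. schurP N k x)"

definition catalan :: "nat \<Rightarrow> rat" where
  "catalan k = of_nat ((2*k) choose k) / of_nat (k + 1)"

end

theory Submission
  imports Defs "HOL-Combinatorics.Multiset_Permutations"
begin

(* Write F(t) = 1 + 2 sum_k P_k t^k = E + O with E even and O odd. Since every factor
   (1 + x t)/(1 - x t) of F is inverted by t |-> -t, F(t) F(-t) = E^2 - O^2 = 1, so
   E = sqrt (1 + O^2) = sum_i (1/2 choose i) O^(2i). Now O = 2 Q with Q = sum_{k odd} P_k t^k,
   and (1/2 choose i) 4^i / 2 = (-1)^(i-1) C_(i-1); expanding the coefficient of t^(2n) in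
   Q^(2i) as a sum over words of odd parts and grouping the words by their multiset of
   parts lambda produces the multinomial coefficient l(lambda)! / (m_1! m_3! ...). *)

unbundle fps_syntax

definition fps_even_part :: "'a::zero fps \<Rightarrow> 'a fps" where
  "fps_even_part f = Abs_fps (\<lambda>n. if even n then f $ n else 0)"

definition fps_odd_part :: "'a::zero fps \<Rightarrow> 'a fps" where
  "fps_odd_part f = Abs_fps (\<lambda>n. if odd n then f $ n else 0)"

lemma fps_even_plus_odd_part: "fps_even_part f + fps_odd_part f = (f :: 'a::monoid_add fps)"
  by (rule fps_ext) (simp add: fps_even_part_def fps_odd_part_def)

lemma fps_compose_uminus_X_eq_even_minus_odd:
  "f oo - fps_X = fps_even_part f - fps_odd_part (f :: 'a::comm_ring_1 fps)"
  by (rule fps_ext) (simp add: fps_compose_uminus' fps_even_part_def fps_odd_part_def)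

lemma fps_square_eq_imp_eq:
  fixes g h :: "'a::field_char_0 fps"
  assumes "g\<^sup>2 = h\<^sup>2" and "g $ 0 = h $ 0" and "h $ 0 \<noteq> 0"
  shows "g = h"
proof -
  have "g = h \<or> g = - h"
    using assms(1) by (simp add: power2_eq_square square_eq_iff)
  moreover have "g \<noteq> - h"
  proof
    assume "g = - h"
    then have "h $ 0 = - h $ 0" using assms(2) by simp
    then show False using assms(3) by simp
  qed
  ultimately show ?thesis by blast
qed

lemma fps_binomial_half_compose_square:
  fixes c :: "'a::field_char_0 fps"
  assumes "c $ 0 = 0"
  shows "(fps_binomial (1/2) oo c)\<^sup>2 = 1 + c"
proof -
  have "(fps_binomial (1/2) oo c)\<^sup>2 = (fps_binomial (1/2) * fps_binomial (1/2)) oo c"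
    using assms by (simp add: power2_eq_square fps_compose_mult_distrib)
  also have "\<dots> = fps_binomial 1 oo c"
    by (simp flip: fps_binomial_add_mult)
  finally show ?thesis
    using assms by (simp add: fps_binomial_1 fps_compose_add_distrib)
qed

lemma fps_even_part_eq_sqrt:
  fixes f :: "'a::field_char_0 fps"
  assumes "f $ 0 = 1" and "f * (f oo - fps_X) = 1"
  shows "fps_even_part f = fps_binomial (1/2) oo (fps_odd_part f)\<^sup>2"
proof (rule fps_square_eq_imp_eq)
  let ?E = "fps_even_part f" and ?O = "fps_odd_part f"
  have "(?E + ?O) * (?E - ?O) = 1"
    using assms(2) by (simp only: fps_even_plus_odd_part fps_compose_uminus_X_eq_even_minus_odd)
  then have "?E\<^sup>2 - ?O\<^sup>2 = 1"
    by (simp only: power2_eq_square square_diff_square_factored)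
  then have "?E\<^sup>2 = 1 + ?O\<^sup>2"
    by (simp add: diff_eq_eq)
  moreover have "?O\<^sup>2 $ 0 = 0"
    by (simp add: power2_eq_square fps_odd_part_def)
  ultimately show "?E\<^sup>2 = (fps_binomial (1/2) oo ?O\<^sup>2)\<^sup>2"
    by (metis fps_binomial_half_compose_square)
  show "?E $ 0 = (fps_binomial (1/2) oo ?O\<^sup>2) $ 0"
    using assms(1) by (simp add: fps_even_part_def)
qed (simp add: fps_binomial_def)

lemma fps_nth_even_eq_sum_odd_part_powers:
  fixes f :: "'a::field_char_0 fps"
  assumes "f $ 0 = 1" and "f * (f oo - fps_X) = 1"
  shows "f $ (2*n) = (\<Sum>i\<le>n. (1/2 gchoose i) * (fps_odd_part f ^ (2*i)) $ (2*n))"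
proof -
  have "f $ (2*n) = fps_even_part f $ (2*n)"
    by (simp add: fps_even_part_def)
  also have "\<dots> = (\<Sum>i=0..2*n. (1/2 gchoose i) * (fps_odd_part f ^ (2*i)) $ (2*n))"
    by (simp add: fps_even_part_eq_sqrt[OF assms] fps_compose_nth power_mult)
  also have "\<dots> = (\<Sum>i\<le>n. (1/2 gchoose i) * (fps_odd_part f ^ (2*i)) $ (2*n))"
  proof (rule sum.mono_neutral_right)
    have "(fps_odd_part f ^ (2*i)) $ (2*n) = 0" if "n < i" for i
      using that startsby_zero_power_prefix[of "fps_odd_part f"] by (simp add: fps_odd_part_def)
    then show "\<forall>i\<in>{0..2*n} - {..n}. (1/2 gchoose i) * (fps_odd_part f ^ (2*i)) $ (2*n) = 0"
      by auto
  qed auto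
  finally show ?thesis .
qed

lemma fps_power_nth_natpermute:
  "((f :: 'a::comm_ring_1 fps) ^ j) $ s = (\<Sum>xs\<in>natpermute s j. \<Prod>k\<leftarrow>xs. f $ k)"
proof (cases j)
  case 0
  then show ?thesis by (simp add: natpermute_0)
next
  case (Suc m)
  have "(\<Prod>i=0..m. f $ (xs ! i)) = (\<Prod>k\<leftarrow>xs. f $ k)" if "xs \<in> natpermute s j" for xs
    using that Suc by (simp add: natpermute_def prod.list_conv_set_nth atLeastLessThanSuc_atLeastAtMost)
  then show ?thesis
    using Suc by (simp add: fps_power_nth_Suc del: power_Suc)
qed

lemma mset_natpermute: "mset ` natpermute s j = {A. size A = j \<and> sum_mset A = s}"
proof (intro set_eqI iffI)
  fix A assume "A \<in> {A. size A = j \<and> sum_mset A = s}"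
  moreover obtain xs where "mset xs = A" using ex_mset by blast
  ultimately show "A \<in> mset ` natpermute s j"
    by (auto simp: natpermute_def sum_mset_sum_list)
qed (auto simp: natpermute_def sum_mset_sum_list)

lemma natpermute_mset_eq:
  "{xs \<in> natpermute (sum_mset A) (size A). mset xs = A} = permutations_of_multiset A"
  by (auto simp: natpermute_def permutations_of_multiset_def sum_mset_sum_list)

lemma fps_power_nth_multisets:
  fixes f :: "'a::comm_ring_1 fps"
  shows "(f ^ j) $ s = (\<Sum>A | size A = j \<and> sum_mset A = s.
           of_nat (card (permutations_of_multiset A)) * (\<Prod>k\<in>#A. f $ k))"
proof -
  have "(f ^ j) $ s = (\<Sum>xs\<in>natpermute s j. \<Prod>k\<in>#mset xs. f $ k)"
    by (simp add: fps_power_nth_natpermute prod_mset_prod_list flip: mset_map)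
  also have "\<dots> = (\<Sum>A\<in>mset ` natpermute s j.
      \<Sum>xs | xs \<in> natpermute s j \<and> mset xs = A. \<Prod>k\<in>#mset xs. f $ k)"
    by (rule sum.image_gen[OF natpermute_finite])
  also have "\<dots> = (\<Sum>A | size A = j \<and> sum_mset A = s.
      \<Sum>xs\<in>permutations_of_multiset A. \<Prod>k\<in>#A. f $ k)"
  proof (rule sum.cong)
    fix A assume "A \<in> {A. size A = j \<and> sum_mset A = s}"
    then have fiber: "{xs. xs \<in> natpermute s j \<and> mset xs = A} = permutations_of_multiset A"
      using natpermute_mset_eq[of A] by auto
    show "(\<Sum>xs | xs \<in> natpermute s j \<and> mset xs = A. \<Prod>k\<in>#mset xs. f $ k) =
        (\<Sum>xs\<in>permutations_of_multiset A. \<Prod>k\<in>#A. f $ k)"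
      unfolding fiber by (rule sum.cong) (simp_all add: permutations_of_multiset_def)
  qed (rule mset_natpermute)
  also have "\<dots> = (\<Sum>A | size A = j \<and> sum_mset A = s.
      of_nat (card (permutations_of_multiset A)) * (\<Prod>k\<in>#A. f $ k))"
    by simp
  finally show ?thesis .
qed

lemma of_nat_card_permutations_of_multiset:
  "(of_nat (card (permutations_of_multiset A)) :: 'a::field_char_0) =
     fact (size A) / (\<Prod>k\<in>set_mset A. fact (count A k))"
proof -
  have "(of_nat (card (permutations_of_multiset A)) :: 'a) * (\<Prod>k\<in>set_mset A. fact (count A k)) = fact (size A)"
    using arg_cong[OF card_permutations_of_multiset_aux[of A], of "of_nat :: nat \<Rightarrow> 'a"]
    by simp
  then show ?thesis
    by (simp add: eq_divide_eq)
qed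

lemma size_le_sum_mset: "\<forall>k\<in>#A. 0 < k \<Longrightarrow> size A \<le> sum_mset (A :: nat multiset)"
  by (induction A) auto

lemma finite_multisets_size_sum: "finite {A :: nat multiset. size A = j \<and> sum_mset A = s}"
  unfolding mset_natpermute[symmetric] by (rule finite_imageI[OF natpermute_finite])

lemma fps_power_nth_odd_multisets:
  fixes f :: "'a::comm_ring_1 fps"
  assumes "\<And>k. even k \<Longrightarrow> f $ k = 0"
  shows "(f ^ j) $ s = (\<Sum>A | (\<forall>k\<in>#A. odd k) \<and> sum_mset A = s \<and> size A = j.
           of_nat (card (permutations_of_multiset A)) * (\<Prod>k\<in>#A. f $ k))"
  unfolding fps_power_nth_multisets
proof (rule sum.mono_neutral_right)
  show "finite {A. size A = j \<and> sum_mset A = s}"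
    by (rule finite_multisets_size_sum)
  show "\<forall>A\<in>{A. size A = j \<and> sum_mset A = s} - {A. (\<forall>k\<in>#A. odd k) \<and> sum_mset A = s \<and> size A = j}.
      of_nat (card (permutations_of_multiset A)) * (\<Prod>k\<in>#A. f $ k) = 0"
  proof
    fix A assume "A \<in> {A. size A = j \<and> sum_mset A = s} - {A. (\<forall>k\<in>#A. odd k) \<and> sum_mset A = s \<and> size A = j}"
    then obtain k B where "A = add_mset k B" and "even k"
      by (auto dest: multi_member_split)
    then have "(\<Prod>k\<in>#A. f $ k) = 0"
      using assms by simp
    then show "of_nat (card (permutations_of_multiset A)) * (\<Prod>k\<in>#A. f $ k) = 0"
      by simp
  qed
qed auto

lemma fps_odd_power_nth_even_eq_0:
  fixes f :: "'a::comm_ring_1 fps"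
  assumes "\<And>k. even k \<Longrightarrow> f $ k = 0" and "odd j" and "even s"
  shows "(f ^ j) $ s = 0"
proof -
  have "(\<forall>k\<in>#A. odd k) \<Longrightarrow> even (sum_mset A) \<longleftrightarrow> even (size A)" for A :: "nat multiset"
    by (induction A) auto
  then have "{A. (\<forall>k\<in>#A. odd k) \<and> sum_mset A = s \<and> size A = j} = {}"
    using assms(2,3) by auto
  moreover have "(f ^ j) $ s = (\<Sum>A | (\<forall>k\<in>#A. odd k) \<and> sum_mset A = s \<and> size A = j.
      of_nat (card (permutations_of_multiset A)) * (\<Prod>k\<in>#A. f $ k))"
    using assms(1) by (rule fps_power_nth_odd_multisets)
  ultimately show ?thesis
    by (simp only: sum.empty)
qed

lemma sum_odd_multisets_eq_sum_powers:
  fixes f :: "'a::comm_ring_1 fps" and c :: "nat \<Rightarrow> 'a"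
  assumes "\<And>k. even k \<Longrightarrow> f $ k = 0"
  shows "(\<Sum>A | (\<forall>k\<in>#A. odd k) \<and> sum_mset A = s.
            c (size A) * (of_nat (card (permutations_of_multiset A)) * (\<Prod>k\<in>#A. f $ k)))
       = (\<Sum>j\<le>s. c j * (f ^ j) $ s)"
proof -
  let ?S = "{A. (\<forall>k\<in>#A. odd k) \<and> sum_mset A = s}"
  have size_le: "size A \<le> s" if "A \<in> ?S" for A
    using that by (metis (mono_tags, lifting) mem_Collect_eq odd_pos size_le_sum_mset)
  have "?S \<subseteq> (\<Union>j\<le>s. {A. size A = j \<and> sum_mset A = s})"
    using size_le by auto
  then have "finite ?S"
    by (rule finite_subset) (simp add: finite_multisets_size_sum)
  moreover have "size ` ?S \<subseteq> {..s}"
    using size_le by blast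
  ultimately have "(\<Sum>A\<in>?S. c (size A) * (of_nat (card (permutations_of_multiset A)) * (\<Prod>k\<in>#A. f $ k)))
      = (\<Sum>j\<le>s. \<Sum>A | A \<in> ?S \<and> size A = j.
            c (size A) * (of_nat (card (permutations_of_multiset A)) * (\<Prod>k\<in>#A. f $ k)))"
    by (intro sum.group[symmetric]) simp_all
  also have "\<dots> = (\<Sum>j\<le>s. c j * (f ^ j) $ s)"
  proof (rule sum.cong)
    fix j
    have "{A. A \<in> ?S \<and> size A = j} = {A. (\<forall>k\<in>#A. odd k) \<and> sum_mset A = s \<and> size A = j}"
      by auto
    then show "(\<Sum>A | A \<in> ?S \<and> size A = j.
            c (size A) * (of_nat (card (permutations_of_multiset A)) * (\<Prod>k\<in>#A. f $ k)))
        = c j * (f ^ j) $ s"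
      using fps_power_nth_odd_multisets[of f j s] assms by (simp add: sum_distrib_left)
  qed simp
  finally show ?thesis .
qed

lemma sum_atMost_double_eq_sum_even:
  fixes g :: "nat \<Rightarrow> 'a::comm_monoid_add" and n :: nat
  assumes "\<And>j. odd j \<Longrightarrow> g j = 0"
  shows "(\<Sum>j\<le>2*n. g j) = (\<Sum>i\<le>n. g (2*i))"
proof (induction n)
  case (Suc n)
  have "2 * Suc n = Suc (Suc (2*n))" by simp
  then show ?case
    using Suc assms[of "Suc (2*n)"] by simp
qed simp

lemma catalan_eq_fact: "catalan m = fact (2*m) / (fact m * fact (Suc m))"
  by (simp add: catalan_def binomial_fact field_simps mult_2)

lemma catalan_Suc: "of_nat (m + 2) * catalan (Suc m) = 2 * of_nat (2*m + 1) * catalan m"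
proof -
  have "fact (2 * Suc m) = (2 * of_nat m + 2) * (2 * of_nat m + 1) * (fact (2*m) :: rat)"
    by (simp add: algebra_simps)
  then show ?thesis
    by (simp add: catalan_eq_fact divide_simps) (simp add: algebra_simps)
qed

lemma gbinomial_half_Suc_eq_catalan:
  "((1/2 :: rat) gchoose Suc m) * 4 ^ Suc m / 2 = (-1) ^ m * catalan m"
proof (induction m)
  case 0
  then show ?case by (simp add: catalan_def)
next
  case (Suc m)
  have rec: "of_nat (m + 2) * ((1/2 :: rat) gchoose Suc (Suc m)) = - (of_nat (2*m + 1) / 2) * (1/2 gchoose Suc m)"
    using gbinomial_absorption[of "Suc m" "1/2::rat"] gbinomial_absorb_comp[of "1/2::rat" "Suc m"]
    by (simp add: field_simps)
  have "of_nat (m + 2) * (((1/2 :: rat) gchoose Suc (Suc m)) * 4 ^ Suc (Suc m) / 2)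
      = (of_nat (m + 2) * ((1/2 :: rat) gchoose Suc (Suc m))) * 4 ^ Suc (Suc m) / 2"
    by simp
  also have "\<dots> = - 2 * of_nat (2*m + 1) * (((1/2 :: rat) gchoose Suc m) * 4 ^ Suc m / 2)"
    unfolding rec by (simp add: field_simps)
  also have "\<dots> = (-1) ^ Suc m * (2 * of_nat (2*m + 1) * catalan m)"
    unfolding Suc.IH by (simp add: algebra_simps)
  also have "\<dots> = of_nat (m + 2) * ((-1) ^ Suc m * catalan (Suc m))"
    unfolding catalan_Suc[symmetric] by (simp only: mult_ac)
  finally show ?case
    by (subst (asm) mult_left_cancel) simp_all
qed

(* At j = 0 truncated subtraction yields the meaningless value 1; it only ever multiplies
   the vanishing coefficient of t^(2n) in Q^0. *)
definition catalan_weight :: "nat \<Rightarrow> rat" where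
  "catalan_weight j = (-1) ^ ((j - 2) div 2) * catalan ((j - 2) div 2)"

lemma genP_nth_0: "genP N x $ 0 = 1"
  by (induction N) (simp_all add: genP_def fps_inverse_def)

lemma genP_mult_reflect: "genP N x * (genP N x oo - fps_X) = 1"
proof (induction N)
  case 0
  then show ?case by (simp add: genP_def)
next
  case (Suc N)
  define a where "a = 1 + fps_const (x N) * fps_X"
  define b where "b = 1 - fps_const (x N) * fps_X"
  have G: "genP (Suc N) x = genP N x * (a * inverse b)"
    by (simp add: genP_def a_def b_def)
  have ab: "a oo - fps_X = b" "b oo - fps_X = a"
    by (simp_all add: a_def b_def fps_compose_add_distrib fps_compose_sub_distrib fps_compose_mult_distrib)
  have "inverse b oo - fps_X = inverse a"
    using fps_inverse_compose[of "- fps_X" b] ab by (simp add: b_def)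
  then have "genP (Suc N) x oo - fps_X = (genP N x oo - fps_X) * (b * inverse a)"
    by (simp add: G fps_compose_mult_distrib ab)
  then have "genP (Suc N) x * (genP (Suc N) x oo - fps_X)
      = (genP N x * (genP N x oo - fps_X)) * (a * inverse a) * (b * inverse b)"
    by (simp add: G mult_ac)
  moreover have "a * inverse a = 1" "b * inverse b = 1"
    by (simp_all add: a_def b_def inverse_mult_eq_1')
  ultimately show ?case
    using Suc.IH by simp
qed

definition schurP_fps :: "nat \<Rightarrow> (nat \<Rightarrow> rat) \<Rightarrow> rat fps" where
  "schurP_fps N x = Abs_fps (\<lambda>k. schurP N k x)"

lemma schurP_even_eq_sum_powers:
  assumes "n \<ge> 1"
  shows "schurP N (2*n) x = (\<Sum>j\<le>2*n. catalan_weight j * (fps_odd_part (schurP_fps N x) ^ j) $ (2*n))"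
proof -
  let ?Q = "fps_odd_part (schurP_fps N x)"
  have odd_genP: "fps_odd_part (genP N x) = fps_const 2 * ?Q"
    by (rule fps_ext) (auto simp: fps_odd_part_def schurP_fps_def schurP_def)
  have "schurP N (2*n) x = genP N x $ (2*n) / 2"
    using assms by (simp add: schurP_def)
  also have "\<dots> = (\<Sum>i\<le>n. (1/2 gchoose i) * 4 ^ i / 2 * (?Q ^ (2*i)) $ (2*n))"
    by (simp add: fps_nth_even_eq_sum_odd_part_powers[OF genP_nth_0 genP_mult_reflect] odd_genP
        power_mult_distrib power_mult sum_divide_distrib mult.assoc)
  also have "\<dots> = (\<Sum>i\<le>n. catalan_weight (2*i) * (?Q ^ (2*i)) $ (2*n))"
  proof (rule sum.cong[OF refl])
    fix i
    show "(1/2 gchoose i) * 4 ^ i / 2 * (?Q ^ (2*i)) $ (2*n) = catalan_weight (2*i) * (?Q ^ (2*i)) $ (2*n)"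
    proof (cases i)
      case 0
      then show ?thesis using assms by simp
    next
      case (Suc m)
      then show ?thesis
        unfolding catalan_weight_def Suc gbinomial_half_Suc_eq_catalan by simp
    qed
  qed
  also have "\<dots> = (\<Sum>j\<le>2*n. catalan_weight j * (?Q ^ j) $ (2*n))"
    by (rule sum_atMost_double_eq_sum_even[symmetric])
      (simp add: fps_odd_power_nth_even_eq_0 fps_odd_part_def)
  finally show ?thesis .
qed

theorem corollary3p2:
  fixes n N :: nat and x :: "nat \<Rightarrow> rat"
  assumes "n \<ge> 1"
  shows "schurP N (2*n) x =
    (\<Sum>lam \<in> {lam :: nat multiset. (\<forall>k\<in>#lam. odd k) \<and> sum_mset lam = 2*n}.
       (-1) ^ ((size lam - 2) div 2) * catalan ((size lam - 2) div 2)
       * (fact (size lam) / (\<Prod>k\<in>set_mset lam. fact (count lam k)))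
       * V N lam x)"
proof -
  let ?Q = "fps_odd_part (schurP_fps N x)"
  have V_eq: "V N lam x = (\<Prod>k\<in>#lam. ?Q $ k)" if "\<forall>k\<in>#lam. odd k" for lam
    unfolding V_def using that
    by (intro arg_cong[where f = prod_mset] image_mset_cong) (simp add: fps_odd_part_def schurP_fps_def)
  have "schurP N (2*n) x = (\<Sum>j\<le>2*n. catalan_weight j * (?Q ^ j) $ (2*n))"
    using assms by (rule schurP_even_eq_sum_powers)
  also have "\<dots> = (\<Sum>lam | (\<forall>k\<in>#lam. odd k) \<and> sum_mset lam = 2*n. catalan_weight (size lam)
      * (of_nat (card (permutations_of_multiset lam)) * (\<Prod>k\<in>#lam. ?Q $ k)))"
    by (rule sum_odd_multisets_eq_sum_powers[symmetric]) (simp add: fps_odd_part_def)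
  also have "\<dots> = (\<Sum>lam | (\<forall>k\<in>#lam. odd k) \<and> sum_mset lam = 2*n.
       (-1) ^ ((size lam - 2) div 2) * catalan ((size lam - 2) div 2)
       * (fact (size lam) / (\<Prod>k\<in>set_mset lam. fact (count lam k)))
       * V N lam x)"
    by (intro sum.cong refl) (simp add: V_eq catalan_weight_def of_nat_card_permutations_of_multiset)
  finally show ?thesis .
qed

end
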